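(* Consider $\min f(x)$ s.t. $g(x)\in K$ with $f,g$ twice continuously differentiable, $K\subseteq\mathbb{R}^m$ closed, $C:=g^{-1}(K)$. Let $\bar x\in C$, $d\in T_C(\bar x)\setminus\{0\}$ with $\nabla f(\bar x)d=0$, and suppose there is $\lambda\in\mathbb{R}^m$ with $\nabla_xL(\bar x,\lambda)=0$ such that (i) $\langle\lambda,v\rangle<0$ for all $v\in T_K^{''}(g(\bar x);\nabla g(\bar x)d)\cap\nabla g(\bar x)(\{d\}^\perp\setminus\{0\})$; (ii) $\nabla^2_{xx}L(\bar x,\lambda)(d,d)-\sigma_{T_K^2(g(\bar x);\nabla g(\bar x)d)}(\lambda)>0$. Then there exist $\kappa,\rho,\delta>0$ with $f(x)\ge f(\bar x)+\kappa\|x-\bar x\|^2$ for all $x\in C\cap(\bar x+V_{\rho,\delta}(d))$. Moreover, if $\nabla f(\bar x)d\ge0$ for all $d\in T_C(\bar x)$ and for every $d\in C(\bar x)\setminus\{0\}$ there is $\lambda$ with $\nabla_xL(\bar x,\lambda)=0$ satisfying (i) and (ii), then there exist $\kappa,\delta>0$ with $f(x)\ge f(\bar x)+\kappa\|x-\bar x\|^2$ for all $x\in C$ with $\|x-\bar x\|\le\delta$.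
   Context: $L(x,\lambda):=f(x)+\langle\lambda,g(x)\rangle$; $\nabla g(\bar x)(\{d\}^\perp\setminus\{0\})$ is the image under $\nabla g(\bar x)$ of nonzero vectors orthogonal to $d$. Critical cone $C(\bar x):=\{d\mid\nabla g(\bar x)d\in T_K(g(\bar x)),\ \nabla f(\bar x)d\le0\}$. $T_K^2(\bar y;v):=\{w\mid \exists t_k\downarrow0,w_k\to w,\ \bar y+t_kv+\tfrac12t_k^2w_k\in K\}$; $T_K^{''}(\bar y;v):=\{w\mid \exists(t_k,r_k)\downarrow(0,0),w_k\to w,\ t_k/r_k\to0,\ \bar y+t_kv+\tfrac12t_kr_kw_k\in K\}$. $\sigma_S(\lambda):=\sup_{u\in S}\langle\lambda,u\rangle$, $\sigma_\emptyset\equiv-\infty$. $V_{\rho,\delta}(d):=\{w\in\delta B_{\mathbb{R}^n}\mid\|\,\|d\|w-\|w\|d\,\|\le\rho\|w\|\|d\|\}$. *)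

theory Defs
  imports "HOL-Analysis.Analysis"
begin

definition tangent_cone :: "'a::real_normed_vector set \<Rightarrow> 'a \<Rightarrow> 'a set" where
  "tangent_cone S x = {d. \<exists>t dd. (\<forall>k. t k > (0::real)) \<and> t \<longlonglongrightarrow> 0 \<and> dd \<longlonglongrightarrow> d
        \<and> (\<forall>k. x + t k *\<^sub>R dd k \<in> S)}"

definition second_tangent_set :: "'a::real_normed_vector set \<Rightarrow> 'a \<Rightarrow> 'a \<Rightarrow> 'a set" where
  "second_tangent_set K y v = {w. \<exists>t ww. (\<forall>k. t k > (0::real)) \<and> t \<longlonglongrightarrow> 0 \<and> ww \<longlonglongrightarrow> w
        \<and> (\<forall>k. y + t k *\<^sub>R v + ((1/2) * (t k)\<^sup>2) *\<^sub>R ww k \<in> K)}"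

definition asymp_second_tangent_cone :: "'a::real_normed_vector set \<Rightarrow> 'a \<Rightarrow> 'a \<Rightarrow> 'a set" where
  "asymp_second_tangent_cone K y v = {w. \<exists>t r ww. (\<forall>k. t k > (0::real)) \<and> (\<forall>k. r k > (0::real))
        \<and> t \<longlonglongrightarrow> 0 \<and> r \<longlonglongrightarrow> 0 \<and> (\<lambda>k. t k / r k) \<longlonglongrightarrow> 0 \<and> ww \<longlonglongrightarrow> w
        \<and> (\<forall>k. y + t k *\<^sub>R v + ((1/2) * t k * r k) *\<^sub>R ww k \<in> K)}"

text \<open>Support function, with values in the extended reals; sigma of the empty set is -infinity.\<close>
definition support_fun :: "'a::real_inner set \<Rightarrow> 'a \<Rightarrow> ereal" where
  "support_fun S l = (SUP u\<in>S. ereal (l \<bullet> u))"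

definition V_set :: "real \<Rightarrow> real \<Rightarrow> 'a::real_normed_vector \<Rightarrow> 'a set" where
  "V_set \<rho> \<delta> d = {w \<in> cball 0 \<delta>. norm (norm d *\<^sub>R w - norm w *\<^sub>R d) \<le> \<rho> * norm w * norm d}"

definition soc_multiplier ::
  "('a::euclidean_space \<Rightarrow>\<^sub>L real) \<Rightarrow> ('a \<Rightarrow>\<^sub>L 'a \<Rightarrow>\<^sub>L real) \<Rightarrow>
   ('a \<Rightarrow>\<^sub>L 'b::euclidean_space) \<Rightarrow> ('a \<Rightarrow>\<^sub>L 'a \<Rightarrow>\<^sub>L 'b) \<Rightarrow> 'b set \<Rightarrow> 'b \<Rightarrow> 'a \<Rightarrow> 'b \<Rightarrow> bool" where
  "soc_multiplier Df D2f Dg D2g K y d l \<longleftrightarrow>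
     (\<forall>u. blinfun_apply Df u + l \<bullet> blinfun_apply Dg u = 0)
   \<and> (\<forall>v \<in> asymp_second_tangent_cone K y (blinfun_apply Dg d)
             \<inter> blinfun_apply Dg ` ({u. u \<bullet> d = 0} - {0}). l \<bullet> v < 0)
   \<and> ereal (blinfun_apply (blinfun_apply D2f d) d + l \<bullet> blinfun_apply (blinfun_apply D2g d) d)
       - support_fun (second_tangent_set K y (blinfun_apply Dg d)) l > 0"

end

theory Submission
  imports Defs
begin

text \<open>
  If quadratic growth fails, there are feasible points
  \<open>xb + t\<^sub>k w\<^sub>k\<close> with \<open>t\<^sub>k \<rightarrow> 0\<close>, \<open>norm w\<^sub>k = norm d\<close>, \<open>w\<^sub>k \<rightarrow> d\<close> and
  \<open>f (xb + t\<^sub>k w\<^sub>k) < f xb + o(t\<^sub>k\<^sup>2)\<close>. With \<open>r\<^sub>k = t\<^sub>k + norm (w\<^sub>k - d)\<close> pass to a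
  subsequence along which \<open>(w\<^sub>k - d) / r\<^sub>k \<rightarrow> u\<close> and \<open>t\<^sub>k / r\<^sub>k \<rightarrow> \<tau>\<close>; then
  \<open>norm u + \<tau> = 1\<close>, and \<open>u \<bottom> d\<close> because the \<open>w\<^sub>k\<close> lie on a sphere through \<open>d\<close>.
  Writing \<open>g (xb + t\<^sub>k w\<^sub>k) = g xb + t\<^sub>k g' d + \<onehalf> t\<^sub>k r\<^sub>k z\<^sub>k\<close>, Taylor expansion gives
  \<open>z\<^sub>k \<rightarrow> z = 2 g' u + \<tau> g'' d d\<close>, and expanding the Lagrangian (whose gradient vanishes)
  turns the descent inequality into \<open>\<tau> \<nabla>\<^sup>2L(d,d) \<le> \<langle>\<lambda>, z\<rangle>\<close>. If \<open>\<tau> = 0\<close>, then \<open>z = g'(2u)\<close>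
  lies in \<open>T''\<close> and contradicts (i); if \<open>\<tau> > 0\<close>, then \<open>z / \<tau>\<close> lies in \<open>T\<^sup>2\<close> and contradicts (ii).
  For the second claim, the normalised directions of a violating sequence cluster at a unit
  vector, which first-order arguments place in the critical cone.
\<close>

lemma second_order_mean_value_inner:
  fixes g :: "'a::real_normed_vector \<Rightarrow> 'b::real_inner"
  assumes g1: "\<And>x. (g has_derivative blinfun_apply (g' x)) (at x)"
    and g2: "\<And>x. (g' has_derivative blinfun_apply (g'' x)) (at x)"
  obtains s where "0 < s" "s < 1"
    "(g (x + h) - g x - g' x h - (1/2) *\<^sub>R g'' x h h) \<bullet> b
       = (1/2) * ((g'' (x + s *\<^sub>R h) h h - g'' x h h) \<bullet> b)"
proof -
  define p0 where "p0 = (\<lambda>s::real. g (x + s *\<^sub>R h) \<bullet> b)"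
  define p1 where "p1 = (\<lambda>s::real. g' (x + s *\<^sub>R h) h \<bullet> b)"
  define p2 where "p2 = (\<lambda>s::real. g'' (x + s *\<^sub>R h) h h \<bullet> b)"
  have line: "((\<lambda>s. x + s *\<^sub>R h) has_derivative (\<lambda>s. s *\<^sub>R h)) (at s)" for s
    by (auto intro!: derivative_eq_intros)
  have p0: "DERIV p0 s :> p1 s" for s
  proof -
    have "((\<lambda>s. g (x + s *\<^sub>R h)) has_derivative (\<lambda>s'. g' (x + s *\<^sub>R h) (s' *\<^sub>R h))) (at s)"
      using has_derivative_compose[OF line g1] by (simp add: o_def)
    from has_derivative_inner_left[OF this, of b]
    have "(p0 has_derivative (\<lambda>s'. s' * p1 s)) (at s)"
      by (simp add: p0_def p1_def blinfun.scaleR_right)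
    then show ?thesis
      by (simp add: has_field_derivative_def mult.commute[of _ "p1 s"])
  qed
  have p1: "DERIV p1 s :> p2 s" for s
  proof -
    have "((\<lambda>y. g' y h) has_derivative (\<lambda>v. g'' (x + s *\<^sub>R h) v h)) (at (x + s *\<^sub>R h))"
      using bounded_bilinear.FDERIV[OF bounded_bilinear_blinfun_apply g2 has_derivative_const[of h]]
      by simp
    from has_derivative_compose[OF line this]
    have "((\<lambda>s. g' (x + s *\<^sub>R h) h) has_derivative (\<lambda>s'. g'' (x + s *\<^sub>R h) (s' *\<^sub>R h) h)) (at s)"
      by (simp add: o_def)
    from has_derivative_inner_left[OF this, of b]
    have "(p1 has_derivative (\<lambda>s'. s' * p2 s)) (at s)"
      by (simp add: p1_def p2_def blinfun.scaleR_right blinfun.scaleR_left)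
    then show ?thesis
      by (simp add: has_field_derivative_def mult.commute[of _ "p2 s"])
  qed
  define diff where "diff = (\<lambda>m::nat. if m = 0 then p0 else if m = 1 then p1 else p2)"
  have "\<exists>s. 0 < s \<and> s < 1 \<and>
      p0 1 = (\<Sum>m<2. diff m 0 / fact m * (1 - 0) ^ m) + diff 2 s / fact 2 * (1 - 0) ^ 2"
    using Taylor[of 2 diff p0 0 1 0 1] p0 p1 unfolding diff_def by (auto simp: less_2_cases_iff)
  then obtain s where "0 < s" "s < 1" "p0 1 = p0 0 + p1 0 + p2 s / 2"
    unfolding diff_def by (auto simp: numeral_2_eq_2)
  then show thesis
    by (intro that[of s]) (simp_all add: p0_def p1_def p2_def algebra_simps)
qed

lemma second_order_taylor_remainder_bound:
  fixes g :: "'a::real_normed_vector \<Rightarrow> 'b::real_inner"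
  assumes g1: "\<And>x. (g has_derivative blinfun_apply (g' x)) (at x)"
    and g2: "\<And>x. (g' has_derivative blinfun_apply (g'' x)) (at x)"
    and cont: "isCont g'' x" and e: "e > 0"
  obtains \<delta> where "\<delta> > 0"
    "\<And>h. norm h < \<delta> \<Longrightarrow> norm (g (x + h) - g x - g' x h - (1/2) *\<^sub>R g'' x h h) \<le> e * (norm h)\<^sup>2"
proof -
  obtain \<delta> where "\<delta> > 0" and \<delta>: "\<And>y. dist y x < \<delta> \<Longrightarrow> dist (g'' y) (g'' x) < 2 * e"
    using cont e unfolding continuous_at_eps_delta by (metis mult_pos_pos zero_less_numeral)
  have "norm (g (x + h) - g x - g' x h - (1/2) *\<^sub>R g'' x h h) \<le> e * (norm h)\<^sup>2"
    if h: "norm h < \<delta>" for h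
  proof -
    define R where "R = g (x + h) - g x - g' x h - (1/2) *\<^sub>R g'' x h h"
    define D where "D s = g'' (x + s *\<^sub>R h) - g'' x" for s
    obtain s where s: "0 < s" "s < 1" "R \<bullet> R = (1/2) * (D s h h \<bullet> R)"
      using second_order_mean_value_inner[OF g1 g2, of x h R]
      unfolding R_def D_def blinfun.diff_left by blast
    have "norm (s *\<^sub>R h) < \<delta>"
      using s h mult_left_le_one_le[of "norm h" s] by simp
    then have "norm (D s) \<le> 2 * e"
      using \<delta>[of "x + s *\<^sub>R h"] by (simp add: D_def dist_norm)
    have "norm (D s h h) \<le> norm (D s) * norm h * norm h"
      using norm_blinfun[of "D s h" h] mult_right_mono[OF norm_blinfun[of "D s" h] norm_ge_zero[of h]]
      by linarith
    also have "\<dots> \<le> 2 * e * (norm h)\<^sup>2"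
      using mult_right_mono[OF \<open>norm (D s) \<le> 2 * e\<close>, of "(norm h)\<^sup>2"]
      by (simp add: power2_eq_square mult.assoc)
    finally have DB: "norm (D s h h) \<le> 2 * e * (norm h)\<^sup>2" .
    have "norm R * norm R = (1/2) * (D s h h \<bullet> R)"
      using s(3) by (simp add: norm_eq_sqrt_inner)
    also have "\<dots> \<le> (1/2) * (norm (D s h h) * norm R)"
      using Cauchy_Schwarz_ineq2[of "D s h h" R] by simp
    also have "\<dots> \<le> (e * (norm h)\<^sup>2) * norm R"
      using mult_right_mono[OF DB, of "norm R"] by (simp add: mult_ac)
    finally show ?thesis
      unfolding R_def[symmetric] by (cases "R = 0") (use e in \<open>auto simp: mult_le_cancel_right\<close>)
  qed
  with \<open>\<delta> > 0\<close> show thesis by (rule that)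
qed

lemma second_order_remainder_tendsto:
  fixes g :: "'a::real_normed_vector \<Rightarrow> 'b::real_inner"
  assumes g1: "\<And>x. (g has_derivative blinfun_apply (g' x)) (at x)"
    and g2: "\<And>x. (g' has_derivative blinfun_apply (g'' x)) (at x)"
    and cont: "isCont g'' x"
    and t: "\<And>k. t k > 0" "t \<longlonglongrightarrow> 0" and w: "w \<longlonglongrightarrow> d"
  shows "(\<lambda>k. (g (x + t k *\<^sub>R w k) - g x - t k *\<^sub>R g' x (w k) - ((t k)\<^sup>2 / 2) *\<^sub>R g'' x (w k) (w k))
            /\<^sub>R (t k)\<^sup>2) \<longlonglongrightarrow> 0"
proof (rule LIMSEQ_I)
  fix e :: real assume "e > 0"
  obtain B where "B > 0" and B: "\<And>k. norm (w k) \<le> B"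
    using convergent_imp_Bseq[OF convergentI[OF w]] by (auto elim: BseqE)
  obtain \<delta> where "\<delta> > 0" and \<delta>: "\<And>h. norm h < \<delta> \<Longrightarrow>
      norm (g (x + h) - g x - g' x h - (1/2) *\<^sub>R g'' x h h) \<le> e / (2 * B\<^sup>2) * (norm h)\<^sup>2"
    using second_order_taylor_remainder_bound[OF g1 g2 cont, of "e / (2 * B\<^sup>2)"] \<open>e > 0\<close> \<open>B > 0\<close>
    by auto
  obtain N where N: "\<And>k. k \<ge> N \<Longrightarrow> t k < \<delta> / B"
    using LIMSEQ_D[OF t(2), of "\<delta> / B"] \<open>\<delta> > 0\<close> \<open>B > 0\<close> t(1) by (auto simp: less_imp_le)
  have "norm ((g (x + t k *\<^sub>R w k) - g x - t k *\<^sub>R g' x (w k) - ((t k)\<^sup>2 / 2) *\<^sub>R g'' x (w k) (w k))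
            /\<^sub>R (t k)\<^sup>2 - 0) < e" if "k \<ge> N" for k
  proof -
    have "norm (t k *\<^sub>R w k) \<le> t k * B"
      using B[of k] t(1)[of k] by (simp add: mult_left_mono)
    also have "\<dots> < \<delta>"
      using N[OF that] \<open>B > 0\<close> by (simp add: pos_less_divide_eq)
    finally have "norm (g (x + t k *\<^sub>R w k) - g x - t k *\<^sub>R g' x (w k) - ((t k)\<^sup>2 / 2) *\<^sub>R g'' x (w k) (w k))
        \<le> e / (2 * B\<^sup>2) * (t k)\<^sup>2 * (norm (w k))\<^sup>2"
      using \<delta>[of "t k *\<^sub>R w k"] t(1)[of k]
      by (simp add: blinfun.scaleR_right blinfun.scaleR_left power2_eq_square mult_ac)
    also have "\<dots> \<le> e / (2 * B\<^sup>2) * (t k)\<^sup>2 * B\<^sup>2"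
      using B[of k] \<open>e > 0\<close> by (intro mult_left_mono power_mono) auto
    also have "\<dots> < e * (t k)\<^sup>2"
      using \<open>e > 0\<close> \<open>B > 0\<close> t(1)[of k] by (simp add: field_simps)
    finally show ?thesis
      using t(1)[of k] by (simp add: divide_simps)
  qed
  then show "\<exists>N. \<forall>k\<ge>N. norm ((g (x + t k *\<^sub>R w k) - g x - t k *\<^sub>R g' x (w k)
      - ((t k)\<^sup>2 / 2) *\<^sub>R g'' x (w k) (w k)) /\<^sub>R (t k)\<^sup>2 - 0) < e"
    by blast
qed

lemma difference_quotient_tendsto:
  fixes g :: "'a::real_normed_vector \<Rightarrow> 'b::real_normed_vector"
  assumes g: "(g has_derivative g') (at x)"
    and t: "\<And>k. t k > 0" "t \<longlonglongrightarrow> 0" and v: "v \<longlonglongrightarrow> d"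
  shows "(\<lambda>k. (g (x + t k *\<^sub>R v k) - g x) /\<^sub>R t k) \<longlonglongrightarrow> g' d"
proof -
  have lin: "bounded_linear g'"
    using g by (rule has_derivative_bounded_linear)
  have "(\<lambda>k. (g (x + t k *\<^sub>R v k) - g x) /\<^sub>R t k - g' (v k)) \<longlonglongrightarrow> 0"
  proof (rule LIMSEQ_I)
    fix e :: real assume "e > 0"
    obtain B where "B > 0" and B: "\<And>k. norm (v k) \<le> B"
      using convergent_imp_Bseq[OF convergentI[OF v]] by (auto elim: BseqE)
    obtain \<delta> where "\<delta> > 0" and \<delta>: "\<And>y. norm (y - x) < \<delta> \<Longrightarrow>
        norm (g y - g x - g' (y - x)) \<le> e / (2 * B) * norm (y - x)"
    proof -
      have "e / (2 * B) > 0"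
        using \<open>e > 0\<close> \<open>B > 0\<close> by simp
      then show ?thesis
        using g that unfolding has_derivative_at_alt by blast
    qed
    obtain N where N: "\<And>k. k \<ge> N \<Longrightarrow> t k < \<delta> / B"
      using LIMSEQ_D[OF t(2), of "\<delta> / B"] \<open>\<delta> > 0\<close> \<open>B > 0\<close> t(1) by (auto simp: less_imp_le)
    have "norm ((g (x + t k *\<^sub>R v k) - g x) /\<^sub>R t k - g' (v k) - 0) < e" if "k \<ge> N" for k
    proof -
      have tv: "norm (t k *\<^sub>R v k) \<le> t k * B"
        using B[of k] t(1)[of k] by (simp add: mult_left_mono)
      also have "\<dots> < \<delta>"
        using N[OF that] \<open>B > 0\<close> by (simp add: pos_less_divide_eq)
      finally have "norm (g (x + t k *\<^sub>R v k) - g x - t k *\<^sub>R g' (v k))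
          \<le> e / (2 * B) * norm (t k *\<^sub>R v k)"
        using \<delta>[of "x + t k *\<^sub>R v k"] by (simp add: linear_scale[OF bounded_linear.linear[OF lin]])
      also have "\<dots> \<le> e / (2 * B) * (t k * B)"
        using tv \<open>e > 0\<close> \<open>B > 0\<close> by (intro mult_left_mono) auto
      also have "\<dots> < e * t k"
        using \<open>e > 0\<close> \<open>B > 0\<close> t(1)[of k] by (simp add: field_simps)
      moreover have "(g (x + t k *\<^sub>R v k) - g x) /\<^sub>R t k - g' (v k)
          = (g (x + t k *\<^sub>R v k) - g x - t k *\<^sub>R g' (v k)) /\<^sub>R t k"
        using t(1)[of k] by (simp add: algebra_simps)
      ultimately show ?thesis
        using t(1)[of k] by (simp add: divide_simps)
    qed
    then show "\<exists>N. \<forall>k\<ge>N. norm ((g (x + t k *\<^sub>R v k) - g x) /\<^sub>R t k - g' (v k) - 0) < e"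
      by blast
  qed
  from tendsto_add[OF this bounded_linear.tendsto[OF lin v]] show ?thesis
    by simp
qed

lemma has_derivative_tangent_cone_vimage:
  assumes g: "(g has_derivative g') (at x)" and d: "d \<in> tangent_cone (g -` K) x"
  shows "g' d \<in> tangent_cone K (g x)"
proof -
  obtain t dd where t: "\<And>k. t k > 0" "t \<longlonglongrightarrow> 0" and dd: "dd \<longlonglongrightarrow> d"
    and K: "\<And>k. g (x + t k *\<^sub>R dd k) \<in> K"
    using d unfolding tangent_cone_def by blast
  define q where "q k = (g (x + t k *\<^sub>R dd k) - g x) /\<^sub>R t k" for k
  have "q \<longlonglongrightarrow> g' d"
    unfolding q_def using difference_quotient_tendsto[OF g t dd] .
  moreover have "g x + t k *\<^sub>R q k \<in> K" for k
    using K[of k] t(1)[of k] by (simp add: q_def)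
  ultimately show ?thesis
    unfolding tangent_cone_def using t by blast
qed

lemma sphere_secant_limit_orthogonal:
  fixes w :: "nat \<Rightarrow> 'a::real_inner"
  assumes norm_w: "\<And>k. norm (w k) = norm d" and w: "w \<longlonglongrightarrow> d"
    and r: "\<And>k. r k > 0" and ub: "(\<lambda>k. (w k - d) /\<^sub>R r k) \<longlonglongrightarrow> ub"
  shows "ub \<bullet> d = 0"
proof -
  have "((w k - d) /\<^sub>R r k) \<bullet> d = - (1/2) * norm (w k - d) * norm ((w k - d) /\<^sub>R r k)" for k
  proof -
    have "w k \<bullet> w k = d \<bullet> d"
      using norm_w[of k] by (metis power2_norm_eq_inner)
    then have "(w k - d) \<bullet> d = - (1/2) * (norm (w k - d))\<^sup>2"
      by (simp add: power2_norm_eq_inner inner_diff_left inner_diff_right inner_commute)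
        (simp add: field_simps)
    then show ?thesis
      using r[of k] by (simp add: power2_eq_square)
  qed
  moreover have "(\<lambda>k. - (1/2) * norm (w k - d) * norm ((w k - d) /\<^sub>R r k)) \<longlonglongrightarrow> - (1/2) * 0 * norm ub"
    using w by (intro tendsto_intros ub) (simp add: tendsto_norm_zero LIM_zero)
  ultimately have "(\<lambda>k. ((w k - d) /\<^sub>R r k) \<bullet> d) \<longlonglongrightarrow> 0"
    by simp
  then show ?thesis
    using LIMSEQ_unique[OF tendsto_inner[OF ub tendsto_const]] by blast
qed

lemma soc_multiplier_excludes_limit_direction:
  fixes Df :: "'a::euclidean_space \<Rightarrow>\<^sub>L real" and D2f :: "'a \<Rightarrow>\<^sub>L 'a \<Rightarrow>\<^sub>L real"
    and Dg :: "'a \<Rightarrow>\<^sub>L 'b::euclidean_space" and D2g :: "'a \<Rightarrow>\<^sub>L 'a \<Rightarrow>\<^sub>L 'b"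
    and d ub :: 'a and \<tau> :: real
  defines "W \<equiv> 2 *\<^sub>R Dg ub + \<tau> *\<^sub>R D2g d d"
  assumes soc: "soc_multiplier Df D2f Dg D2g K y d l"
    and K: "\<And>k. y + t k *\<^sub>R Dg d + ((1/2) * t k * r k) *\<^sub>R ww k \<in> K"
    and t: "\<And>k. t k > 0" "t \<longlonglongrightarrow> 0" and r: "\<And>k. r k > 0" "r \<longlonglongrightarrow> 0"
    and \<tau>: "(\<lambda>k. t k / r k) \<longlonglongrightarrow> \<tau>" and ww: "ww \<longlonglongrightarrow> W"
    and ub: "ub \<bullet> d = 0" "norm ub + \<tau> = 1"
    and le: "\<tau> * (D2f d d + l \<bullet> D2g d d) \<le> l \<bullet> W"
  shows False
proof -
  from soc have asymp: "\<And>v. v \<in> asymp_second_tangent_cone K y (Dg d)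
        \<inter> Dg ` ({u. u \<bullet> d = 0} - {0}) \<Longrightarrow> l \<bullet> v < 0"
    and second: "ereal (D2f d d + l \<bullet> D2g d d) - support_fun (second_tangent_set K y (Dg d)) l > 0"
    unfolding soc_multiplier_def by blast+
  have "\<tau> \<ge> 0"
    using t(1) r(1) by (intro LIMSEQ_le_const[OF \<tau>]) (auto intro!: divide_nonneg_pos less_imp_le)
  show False
  proof (cases "\<tau> = 0")
    case True
    then have "W \<in> asymp_second_tangent_cone K y (Dg d)"
      unfolding asymp_second_tangent_cone_def using K t r \<tau> ww by blast
    moreover have "W \<in> Dg ` ({u. u \<bullet> d = 0} - {0})"
      using True ub by (intro image_eqI[of _ _ "2 *\<^sub>R ub"]) (auto simp: W_def blinfun.scaleR_right)
    ultimately have "l \<bullet> W < 0"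
      by (intro asymp) blast
    with le True show False
      by simp
  next
    case False
    with \<open>\<tau> \<ge> 0\<close> have "\<tau> > 0"
      by simp
    have "W /\<^sub>R \<tau> \<in> second_tangent_set K y (Dg d)"
    proof -
      have "y + t k *\<^sub>R Dg d + ((1/2) * (t k)\<^sup>2) *\<^sub>R (ww k /\<^sub>R (t k / r k)) \<in> K" for k
        using K[of k] t(1)[of k] r(1)[of k] by (simp add: power2_eq_square)
      moreover have "(\<lambda>k. ww k /\<^sub>R (t k / r k)) \<longlonglongrightarrow> W /\<^sub>R \<tau>"
        using False by (intro tendsto_intros \<tau> ww)
      ultimately show ?thesis
        unfolding second_tangent_set_def using t by blast
    qed
    then have "ereal (l \<bullet> (W /\<^sub>R \<tau>)) \<le> support_fun (second_tangent_set K y (Dg d)) l"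
      unfolding support_fun_def by (rule SUP_upper)
    moreover have "D2f d d + l \<bullet> D2g d d \<le> l \<bullet> (W /\<^sub>R \<tau>)"
      using le \<open>\<tau> > 0\<close> by (simp add: field_simps)
    ultimately show False
      using second by (cases "support_fun (second_tangent_set K y (Dg d)) l") auto
  qed
qed

locale twice_differentiable_program =
  fixes f :: "'a::euclidean_space \<Rightarrow> real" and g :: "'a \<Rightarrow> 'b::euclidean_space"
    and f' :: "'a \<Rightarrow> ('a \<Rightarrow>\<^sub>L real)" and f'' :: "'a \<Rightarrow> ('a \<Rightarrow>\<^sub>L 'a \<Rightarrow>\<^sub>L real)"
    and g' :: "'a \<Rightarrow> ('a \<Rightarrow>\<^sub>L 'b)" and g'' :: "'a \<Rightarrow> ('a \<Rightarrow>\<^sub>L 'a \<Rightarrow>\<^sub>L 'b)"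
    and xb :: 'a
  assumes f1: "\<And>x. (f has_derivative blinfun_apply (f' x)) (at x)"
    and f2: "\<And>x. (f' has_derivative blinfun_apply (f'' x)) (at x)" and fc: "isCont f'' xb"
    and g1: "\<And>x. (g has_derivative blinfun_apply (g' x)) (at x)"
    and g2: "\<And>x. (g' has_derivative blinfun_apply (g'' x)) (at x)" and gc: "isCont g'' xb"
begin

lemma soc_multiplier_excludes_convergent_descent_sequence:
  assumes soc: "soc_multiplier (f' xb) (f'' xb) (g' xb) (g'' xb) K (g xb) d l" and fd: "f' xb d = 0"
    and t: "\<And>k. t k > 0" "t \<longlonglongrightarrow> 0"
    and w: "\<And>k. norm (w k) = norm d" "w \<longlonglongrightarrow> d"
    and K: "\<And>k. g (xb + t k *\<^sub>R w k) \<in> K"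
    and ka: "ka \<longlonglongrightarrow> 0" "\<And>k. f (xb + t k *\<^sub>R w k) < f xb + ka k * (t k)\<^sup>2"
    and ub: "(\<lambda>k. (w k - d) /\<^sub>R (t k + norm (w k - d))) \<longlonglongrightarrow> ub"
    and \<tau>: "(\<lambda>k. t k / (t k + norm (w k - d))) \<longlonglongrightarrow> \<tau>"
  shows False
proof -
  have stat: "f' xb v = - (l \<bullet> g' xb v)" for v
    using soc unfolding soc_multiplier_def by (simp add: eq_neg_iff_add_eq_0)
  define r where "r k = t k + norm (w k - d)" for k
  have r: "r k > 0" for k
    using t(1)[of k] by (simp add: r_def add_pos_nonneg)
  have "r \<longlonglongrightarrow> 0"
    unfolding r_def[abs_def] using tendsto_add[OF t(2) tendsto_norm[OF LIM_zero[OF w(2)]]] by simp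
  define Rf where "Rf k = (f (xb + t k *\<^sub>R w k) - f xb - t k *\<^sub>R f' xb (w k)
      - ((t k)\<^sup>2 / 2) *\<^sub>R f'' xb (w k) (w k)) /\<^sub>R (t k)\<^sup>2" for k
  define Rg where "Rg k = (g (xb + t k *\<^sub>R w k) - g xb - t k *\<^sub>R g' xb (w k)
      - ((t k)\<^sup>2 / 2) *\<^sub>R g'' xb (w k) (w k)) /\<^sub>R (t k)\<^sup>2" for k
  have Rf: "Rf \<longlonglongrightarrow> 0"
    unfolding Rf_def[abs_def] using second_order_remainder_tendsto[OF f1 f2 fc t w(2)] .
  have Rg: "Rg \<longlonglongrightarrow> 0"
    unfolding Rg_def[abs_def] using second_order_remainder_tendsto[OF g1 g2 gc t w(2)] .
  define ww where "ww k = (2 / (t k * r k)) *\<^sub>R (g (xb + t k *\<^sub>R w k) - g xb - t k *\<^sub>R g' xb d)" for k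
  have g_chord: "g (xb + t k *\<^sub>R w k) - g xb - t k *\<^sub>R g' xb d
      = t k *\<^sub>R g' xb (w k - d) + ((t k)\<^sup>2 / 2) *\<^sub>R g'' xb (w k) (w k) + (t k)\<^sup>2 *\<^sub>R Rg k" for k
    using t(1)[of k] by (simp add: Rg_def blinfun.diff_right algebra_simps)
  have ww_eq: "ww k = 2 *\<^sub>R g' xb ((w k - d) /\<^sub>R r k)
      + (t k / r k) *\<^sub>R (g'' xb (w k) (w k) + 2 *\<^sub>R Rg k)" for k
  proof -
    have "2 / (t k * r k) * t k = 2 * inverse (r k)" "2 / (t k * r k) * ((t k)\<^sup>2 / 2) = t k / r k"
      "2 / (t k * r k) * (t k)\<^sup>2 = t k / r k * 2"
      using t(1)[of k] r[of k] by (simp_all add: field_simps power2_eq_square)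
    then show ?thesis
      unfolding ww_def g_chord by (simp add: scaleR_add_right blinfun.scaleR_right)
  qed
  have ub': "(\<lambda>k. (w k - d) /\<^sub>R r k) \<longlonglongrightarrow> ub" and \<tau>': "(\<lambda>k. t k / r k) \<longlonglongrightarrow> \<tau>"
    unfolding r_def using ub \<tau> .
  have "ww \<longlonglongrightarrow> 2 *\<^sub>R g' xb ub + \<tau> *\<^sub>R (g'' xb d d + 2 *\<^sub>R 0)"
    unfolding ww_eq[abs_def] by (intro tendsto_intros ub' \<tau>' w(2) Rg)
  then have ww: "ww \<longlonglongrightarrow> 2 *\<^sub>R g' xb ub + \<tau> *\<^sub>R g'' xb d d"
    by simp
  define Q where "Q v = f'' xb v v + l \<bullet> g'' xb v v" for v
  have descent: "- (1/2) * (l \<bullet> ww k) + (t k / r k) * ((1/2) * Q (w k) + Rf k + l \<bullet> Rg k)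
      < ka k * (t k / r k)" for k
  proof -
    have tk: "t k > 0" and rk: "r k > 0"
      using t(1) r by auto
    have f'_w: "f' xb (w k) = - (l \<bullet> g' xb (w k - d))"
      using stat[of "w k"] stat[of d] fd by (simp add: blinfun.diff_right inner_diff_right)
    have f_chord: "f (xb + t k *\<^sub>R w k) - f xb
        = t k * f' xb (w k) + (t k)\<^sup>2 / 2 * f'' xb (w k) (w k) + (t k)\<^sup>2 * Rf k"
      using tk by (simp add: Rf_def field_simps)
    have l_ww: "t k * r k * (l \<bullet> ww k) = 2 * t k * (l \<bullet> g' xb (w k - d))
        + (t k)\<^sup>2 * (l \<bullet> g'' xb (w k) (w k)) + 2 * (t k)\<^sup>2 * (l \<bullet> Rg k)"
      unfolding ww_def g_chord using tk rk by (simp add: inner_add_right field_simps)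
    have "t k * r k * (- (1/2) * (l \<bullet> ww k) + (t k / r k) * ((1/2) * Q (w k) + Rf k + l \<bullet> Rg k))
        = - (1/2) * (t k * r k * (l \<bullet> ww k)) + (t k)\<^sup>2 * ((1/2) * Q (w k) + Rf k + l \<bullet> Rg k)"
      using rk by (simp add: field_simps power2_eq_square)
    also have "\<dots> = f (xb + t k *\<^sub>R w k) - f xb"
      unfolding l_ww f_chord f'_w Q_def by (simp add: algebra_simps power2_eq_square)
    also have "\<dots> < t k * r k * (ka k * (t k / r k))"
      using ka(2)[of k] tk rk by (simp add: power2_eq_square mult_ac)
    finally show ?thesis
      using mult_pos_pos[OF tk rk] mult_less_cancel_left_pos by blast
  qed
  have "- (1/2) * (l \<bullet> (2 *\<^sub>R g' xb ub + \<tau> *\<^sub>R g'' xb d d)) + \<tau> * ((1/2) * Q d + 0 + l \<bullet> 0)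
      \<le> 0 * \<tau>"
  proof (rule LIMSEQ_le)
    show "(\<lambda>k. - (1/2) * (l \<bullet> ww k) + (t k / r k) * ((1/2) * Q (w k) + Rf k + l \<bullet> Rg k))
        \<longlonglongrightarrow> - (1/2) * (l \<bullet> (2 *\<^sub>R g' xb ub + \<tau> *\<^sub>R g'' xb d d)) + \<tau> * ((1/2) * Q d + 0 + l \<bullet> 0)"
      unfolding Q_def by (intro tendsto_intros ww \<tau>' w(2) Rf Rg)
    show "(\<lambda>k. ka k * (t k / r k)) \<longlonglongrightarrow> 0 * \<tau>"
      by (intro tendsto_intros ka(1) \<tau>')
  qed (use descent less_imp_le in blast)
  then have "\<tau> * Q d \<le> l \<bullet> (2 *\<^sub>R g' xb ub + \<tau> *\<^sub>R g'' xb d d)"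
    by simp
  moreover have "g (xb + t k *\<^sub>R w k) = g xb + t k *\<^sub>R g' xb d + ((1/2) * t k * r k) *\<^sub>R ww k" for k
    using t(1)[of k] r[of k] by (simp add: ww_def)
  moreover have "ub \<bullet> d = 0"
    using sphere_secant_limit_orthogonal[OF w r ub'] .
  moreover have "norm ub + \<tau> = 1"
  proof -
    have "norm ((w k - d) /\<^sub>R r k) + t k / r k = 1" for k
    proof -
      have "norm ((w k - d) /\<^sub>R r k) = norm (w k - d) / r k"
        using r[of k] by (simp add: divide_inverse_commute)
      then show ?thesis
        using r[of k] by (simp add: r_def field_simps)
    qed
    then have "(\<lambda>k. norm ((w k - d) /\<^sub>R r k) + t k / r k) \<longlonglongrightarrow> 1"
      by simp
    from LIMSEQ_unique[OF tendsto_add[OF tendsto_norm[OF ub'] \<tau>'] this] show ?thesis .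
  qed
  ultimately show False
    using soc_multiplier_excludes_limit_direction[OF soc _ t r \<open>r \<longlonglongrightarrow> 0\<close> \<tau>' ww]
      K by (simp add: Q_def)
qed

lemma soc_multiplier_excludes_descent_sequence:
  assumes soc: "soc_multiplier (f' xb) (f'' xb) (g' xb) (g'' xb) K (g xb) d l" and fd: "f' xb d = 0"
    and t: "\<And>k. t k > 0" "t \<longlonglongrightarrow> 0"
    and w: "\<And>k. norm (w k) = norm d" "w \<longlonglongrightarrow> d"
    and K: "\<And>k. g (xb + t k *\<^sub>R w k) \<in> K"
    and ka: "ka \<longlonglongrightarrow> 0" "\<And>k. f (xb + t k *\<^sub>R w k) < f xb + ka k * (t k)\<^sup>2"
  shows False
proof -
  define r where "r k = t k + norm (w k - d)" for k
  define p where "p k = ((w k - d) /\<^sub>R r k, t k / r k)" for k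
  have "p k \<in> cball 0 1 \<times> {0..1}" for k
  proof -
    have "r k > 0"
      using t(1)[of k] by (simp add: r_def add_pos_nonneg)
    moreover have "norm ((w k - d) /\<^sub>R r k) = norm (w k - d) / r k"
      using \<open>r k > 0\<close> by (simp add: divide_inverse_commute)
    ultimately show ?thesis
      using t(1)[of k] by (simp add: p_def r_def)
  qed
  then obtain \<sigma> lim where \<sigma>: "strict_mono \<sigma>" and lim: "(p \<circ> \<sigma>) \<longlonglongrightarrow> lim"
    using seq_compactE[OF compact_imp_seq_compact[OF compact_Times[OF compact_cball compact_Icc]]]
    by metis
  obtain ub \<tau> where ub_\<tau>: "lim = (ub, \<tau>)"
    by fastforce
  show False
  proof (rule soc_multiplier_excludes_convergent_descent_sequence[OF soc fd,
        of "t \<circ> \<sigma>" "w \<circ> \<sigma>" "ka \<circ> \<sigma>" ub \<tau>])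
    show "(t \<circ> \<sigma>) \<longlonglongrightarrow> 0" "(w \<circ> \<sigma>) \<longlonglongrightarrow> d" "(ka \<circ> \<sigma>) \<longlonglongrightarrow> 0"
      using LIMSEQ_subseq_LIMSEQ[OF _ \<sigma>] t(2) w(2) ka(1) by auto
    show "(\<lambda>k. ((w \<circ> \<sigma>) k - d) /\<^sub>R ((t \<circ> \<sigma>) k + norm ((w \<circ> \<sigma>) k - d))) \<longlonglongrightarrow> ub"
      using tendsto_fst[OF lim] by (simp add: ub_\<tau> p_def r_def o_def)
    show "(\<lambda>k. (t \<circ> \<sigma>) k / ((t \<circ> \<sigma>) k + norm ((w \<circ> \<sigma>) k - d))) \<longlonglongrightarrow> \<tau>"
      using tendsto_snd[OF lim] by (simp add: ub_\<tau> p_def r_def o_def)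
  qed (use t(1) w(1) K ka(2) in auto)
qed

lemma quadratic_growth_on_V_set:
  assumes d: "d \<noteq> 0" and fd: "f' xb d = 0"
    and soc: "soc_multiplier (f' xb) (f'' xb) (g' xb) (g'' xb) K (g xb) d l"
  shows "\<exists>\<kappa> \<rho> \<delta>. \<kappa> > 0 \<and> \<rho> > 0 \<and> \<delta> > 0 \<and>
           (\<forall>x \<in> g -` K. x - xb \<in> V_set \<rho> \<delta> d \<longrightarrow> f x \<ge> f xb + \<kappa> * (norm (x - xb))\<^sup>2)"
proof (rule ccontr)
  define e where "e k = inverse (real (Suc k))" for k
  have e: "e k > 0" for k
    by (simp add: e_def)
  have e0: "e \<longlonglongrightarrow> 0"
    unfolding e_def[abs_def] by (rule LIMSEQ_inverse_real_of_nat)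
  assume "\<not> ?thesis"
  then have "\<exists>x. g x \<in> K \<and> x - xb \<in> V_set (e k) (e k) d \<and> f x < f xb + e k * (norm (x - xb))\<^sup>2" for k
    using e[of k] by (force simp: not_le)
  then obtain X where K: "\<And>k. g (X k) \<in> K" and V: "\<And>k. X k - xb \<in> V_set (e k) (e k) d"
    and descent: "\<And>k. f (X k) < f xb + e k * (norm (X k - xb))\<^sup>2"
    by metis
  define h where "h k = X k - xb" for k
  have h: "norm (h k) > 0" for k
    using descent[of k] by (auto simp: h_def)
  have h_le: "norm (h k) \<le> e k" and h_dir: "norm (norm d *\<^sub>R h k - norm (h k) *\<^sub>R d) \<le> e k * norm (h k) * norm d" for k
    using V[of k] by (auto simp: V_set_def h_def)
  define t where "t k = norm (h k) / norm d" for k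
  define w where "w k = (norm d / norm (h k)) *\<^sub>R h k" for k
  have X: "X k = xb + t k *\<^sub>R w k" for k
    using h[of k] d by (simp add: t_def w_def h_def)
  show False
  proof (rule soc_multiplier_excludes_descent_sequence[OF soc fd,
        of t w "\<lambda>k. e k * (norm d)\<^sup>2"])
    show "t k > 0" for k
      using h[of k] d by (simp add: t_def)
    show "t \<longlonglongrightarrow> 0"
      by (rule Lim_null_comparison[OF _ tendsto_divide_zero[OF e0, of "norm d"]])
        (use h_le in \<open>auto simp: t_def intro!: always_eventually divide_right_mono\<close>)
    show "norm (w k) = norm d" for k
      using h[of k] by (simp add: w_def)
    have "norm (w k - d) \<le> e k * norm d" for k
    proof -
      have "w k - d = (norm d *\<^sub>R h k - norm (h k) *\<^sub>R d) /\<^sub>R norm (h k)"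
        using h[of k] by (simp add: w_def scaleR_diff_right divide_inverse_commute)
      then show ?thesis
        using h_dir[of k] h[of k] by (simp add: divide_inverse_commute[symmetric] pos_divide_le_eq mult_ac)
    qed
    then show "w \<longlonglongrightarrow> d"
      using Lim_null_comparison[of "\<lambda>k. w k - d" "\<lambda>k. e k * norm d"] tendsto_mult_left_zero[OF e0]
      by (simp add: LIM_zero_iff)
    show "(\<lambda>k. e k * (norm d)\<^sup>2) \<longlonglongrightarrow> 0"
      using tendsto_mult_left_zero[OF e0] by simp
    show "g (xb + t k *\<^sub>R w k) \<in> K" for k
      using K[of k] by (simp add: X)
    show "f (xb + t k *\<^sub>R w k) < f xb + e k * (norm d)\<^sup>2 * (t k)\<^sup>2" for k
    proof -
      have "(norm (h k))\<^sup>2 = (norm d)\<^sup>2 * (t k)\<^sup>2"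
        using d by (simp add: t_def power_divide)
      then show ?thesis
        using descent[of k] by (simp add: X[symmetric] h_def mult_ac)
    qed
  qed
qed

lemma quadratic_growth:
  assumes first_order: "\<forall>d \<in> tangent_cone (g -` K) xb. f' xb d \<ge> 0"
    and second_order: "\<forall>d \<in> {d. g' xb d \<in> tangent_cone K (g xb) \<and> f' xb d \<le> 0} - {0}.
        \<exists>l. soc_multiplier (f' xb) (f'' xb) (g' xb) (g'' xb) K (g xb) d l"
  shows "\<exists>\<kappa> \<delta>. \<kappa> > 0 \<and> \<delta> > 0 \<and>
           (\<forall>x \<in> g -` K. norm (x - xb) \<le> \<delta> \<longrightarrow> f x \<ge> f xb + \<kappa> * (norm (x - xb))\<^sup>2)"
proof (rule ccontr)
  define e where "e k = inverse (real (Suc k))" for k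
  have e: "e k > 0" for k
    by (simp add: e_def)
  have e0: "e \<longlonglongrightarrow> 0"
    unfolding e_def[abs_def] by (rule LIMSEQ_inverse_real_of_nat)
  assume "\<not> ?thesis"
  then have "\<exists>x. g x \<in> K \<and> norm (x - xb) \<le> e k \<and> f x < f xb + e k * (norm (x - xb))\<^sup>2" for k
    using e[of k] by (force simp: not_le)
  then obtain X where K: "\<And>k. g (X k) \<in> K" and X_le: "\<And>k. norm (X k - xb) \<le> e k"
    and descent: "\<And>k. f (X k) < f xb + e k * (norm (X k - xb))\<^sup>2"
    by metis
  define t where "t k = norm (X k - xb)" for k
  define v where "v k = (X k - xb) /\<^sub>R t k" for k
  have t: "t k > 0" for k
    using descent[of k] by (auto simp: t_def)
  have X: "X k = xb + t k *\<^sub>R v k" for k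
    using t[of k] by (simp add: v_def)
  have "v k \<in> sphere 0 1" for k
    using t[of k] by (simp add: v_def t_def)
  then obtain \<sigma> d where "d \<in> sphere 0 1" and \<sigma>: "strict_mono \<sigma>" and v: "(v \<circ> \<sigma>) \<longlonglongrightarrow> d"
    using seq_compactE[OF compact_imp_seq_compact[OF compact_sphere]] by metis
  have t0: "(t \<circ> \<sigma>) \<longlonglongrightarrow> 0"
    by (rule LIMSEQ_subseq_LIMSEQ[OF Lim_null_comparison[OF _ e0] \<sigma>])
      (use X_le in \<open>auto simp: t_def\<close>)
  have d_tangent: "d \<in> tangent_cone (g -` K) xb"
  proof -
    have "\<forall>k. (t \<circ> \<sigma>) k > 0" "\<forall>k. xb + (t \<circ> \<sigma>) k *\<^sub>R (v \<circ> \<sigma>) k \<in> g -` K"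
      using t K by (simp_all add: X)
    then show ?thesis
      unfolding tangent_cone_def using t0 v by blast
  qed
  have "f' xb d \<le> 0"
  proof (rule LIMSEQ_le)
    show "(\<lambda>k. (f (xb + (t \<circ> \<sigma>) k *\<^sub>R (v \<circ> \<sigma>) k) - f xb) /\<^sub>R (t \<circ> \<sigma>) k) \<longlonglongrightarrow> f' xb d"
      using difference_quotient_tendsto[OF f1 _ t0 v] t by simp
    show "(\<lambda>k. (e \<circ> \<sigma>) k * (t \<circ> \<sigma>) k) \<longlonglongrightarrow> 0"
      using tendsto_mult[OF LIMSEQ_subseq_LIMSEQ[OF e0 \<sigma>] t0] by simp
    have "(f (xb + t k *\<^sub>R v k) - f xb) /\<^sub>R t k \<le> e k * t k" for k
    proof -
      have "f (X k) - f xb \<le> e k * t k * t k"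
        using descent[of k] by (simp add: t_def power2_eq_square mult.assoc)
      then have "f (xb + t k *\<^sub>R v k) - f xb \<le> e k * t k * t k"
        by (simp only: X)
      then show ?thesis
        using t[of k] by (simp add: divide_inverse_commute[symmetric] pos_divide_le_eq)
    qed
    then show "\<exists>N. \<forall>k\<ge>N. (f (xb + (t \<circ> \<sigma>) k *\<^sub>R (v \<circ> \<sigma>) k) - f xb) /\<^sub>R (t \<circ> \<sigma>) k
        \<le> (e \<circ> \<sigma>) k * (t \<circ> \<sigma>) k"
      by simp
  qed
  moreover have "f' xb d \<ge> 0"
    using first_order d_tangent by blast
  ultimately have "f' xb d = 0"
    by linarith
  have "g' xb d \<in> tangent_cone K (g xb)"
    using has_derivative_tangent_cone_vimage[OF g1 d_tangent] .
  moreover have "d \<noteq> 0"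
    using \<open>d \<in> sphere 0 1\<close> by auto
  ultimately have "d \<in> {d. g' xb d \<in> tangent_cone K (g xb) \<and> f' xb d \<le> 0} - {0}"
    using \<open>f' xb d = 0\<close> by simp
  then obtain l where soc: "soc_multiplier (f' xb) (f'' xb) (g' xb) (g'' xb) K (g xb) d l"
    using second_order by blast
  have descent_t: "f (xb + t k *\<^sub>R v k) < f xb + e k * (t k)\<^sup>2" for k
    using descent[of k] unfolding t_def[symmetric] X[symmetric] .
  show False
  proof (rule soc_multiplier_excludes_descent_sequence[OF soc \<open>f' xb d = 0\<close>
        _ t0 _ v _ LIMSEQ_subseq_LIMSEQ[OF e0 \<sigma>]])
    show "(t \<circ> \<sigma>) k > 0" "norm ((v \<circ> \<sigma>) k) = norm d" for k
      using t[of "\<sigma> k"] \<open>d \<in> sphere 0 1\<close> by (simp_all add: v_def t_def)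
    show "g (xb + (t \<circ> \<sigma>) k *\<^sub>R (v \<circ> \<sigma>) k) \<in> K"
      "f (xb + (t \<circ> \<sigma>) k *\<^sub>R (v \<circ> \<sigma>) k) < f xb + (e \<circ> \<sigma>) k * ((t \<circ> \<sigma>) k)\<^sup>2" for k
      using K[of "\<sigma> k"] descent_t[of "\<sigma> k"] by (simp_all add: X)
  qed
qed

end

theorem corollary4p15:
  fixes f :: "'a::euclidean_space \<Rightarrow> real" and g :: "'a \<Rightarrow> 'b::euclidean_space"
    and f' :: "'a \<Rightarrow> ('a \<Rightarrow>\<^sub>L real)" and f'' :: "'a \<Rightarrow> ('a \<Rightarrow>\<^sub>L 'a \<Rightarrow>\<^sub>L real)"
    and g' :: "'a \<Rightarrow> ('a \<Rightarrow>\<^sub>L 'b)" and g'' :: "'a \<Rightarrow> ('a \<Rightarrow>\<^sub>L 'a \<Rightarrow>\<^sub>L 'b)"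
    and K :: "'b set" and xb :: 'a
  assumes f1: "\<And>x. (f has_derivative blinfun_apply (f' x)) (at x)"
    and f2: "\<And>x. (f' has_derivative blinfun_apply (f'' x)) (at x)"
    and f2c: "continuous_on UNIV f''"
    and g1: "\<And>x. (g has_derivative blinfun_apply (g' x)) (at x)"
    and g2: "\<And>x. (g' has_derivative blinfun_apply (g'' x)) (at x)"
    and g2c: "continuous_on UNIV g''"
    and Kc: "closed K"
    and xb: "xb \<in> g -` K"
  shows "(\<forall>d l. d \<in> tangent_cone (g -` K) xb - {0} \<and> blinfun_apply (f' xb) d = 0
              \<and> soc_multiplier (f' xb) (f'' xb) (g' xb) (g'' xb) K (g xb) d l
           \<longrightarrow> (\<exists>\<kappa> \<rho> \<delta>. \<kappa> > 0 \<and> \<rho> > 0 \<and> \<delta> > 0 \<and>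
                 (\<forall>x \<in> g -` K. x - xb \<in> V_set \<rho> \<delta> d \<longrightarrow> f x \<ge> f xb + \<kappa> * (norm (x - xb))\<^sup>2)))
       \<and> ((\<forall>d \<in> tangent_cone (g -` K) xb. blinfun_apply (f' xb) d \<ge> 0)
          \<and> (\<forall>d \<in> {d. blinfun_apply (g' xb) d \<in> tangent_cone K (g xb) \<and> blinfun_apply (f' xb) d \<le> 0} - {0}.
                \<exists>l. soc_multiplier (f' xb) (f'' xb) (g' xb) (g'' xb) K (g xb) d l)
          \<longrightarrow> (\<exists>\<kappa> \<delta>. \<kappa> > 0 \<and> \<delta> > 0 \<and>
                 (\<forall>x \<in> g -` K. norm (x - xb) \<le> \<delta> \<longrightarrow> f x \<ge> f xb + \<kappa> * (norm (x - xb))\<^sup>2)))"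
proof -
  interpret twice_differentiable_program f g f' f'' g' g'' xb
    using f1 f2 g1 g2 f2c g2c by unfold_locales (simp_all add: continuous_on_eq_continuous_at)
  show ?thesis
    using quadratic_growth_on_V_set quadratic_growth by blast
qed

end
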